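(* Let $\mathrm{M}$ be a matroid on a finite set $E$, let $\mathcal{M}$ be a proper modular cut of its lattice of flats, and let $e\notin E$. If $F$ is a minimal element of $\mathcal{M}$, then $F\sqcup\{e\}$ is an irreducible flat of $\mathrm{M}\cup_{\mathcal{M}}e$.
   Context: Flats are ordered by inclusion, $\hat0$ is the smallest flat. Flats $F,G$ form a modular pair if $\operatorname{rk}(F\vee G)+\operatorname{rk}(F\wedge G)=\operatorname{rk}F+\operatorname{rk}G$. A modular cut is an upward-closed set $\mathcal{M}$ of flats such that $F\wedge G\in\mathcal{M}$ whenever $F,G\in\mathcal{M}$ form a modular pair; it is proper if $\hat0\notin\mathcal{M}$. The single-element extension $\mathrm{M}\cup_{\mathcal{M}}e$ is the matroid on $E\sqcup\{e\}$ with rank function $\operatorname{rk}(S)=\operatorname{rk}_{\mathrm{M}}(S)$ and $\operatorname{rk}(S\sqcup\{e\})=\operatorname{rk}_{\mathrm{M}}(S)$ if $\operatorname{cl}_{\mathrm{M}}(S)\in\mathcal{M}$ and $\operatorname{rk}_{\mathrm{M}}(S)+1$ otherwise ($S\subseteq E$). A flat $H$ is irreducible if the interval $[\hat0,H]$ of the lattice of flats admits only trivial decompositions as a product of intervals $[\hat0,H_1]\times\dots\times[\hat0,H_m]$ (equivalently $H$ is not the disjoint union of two nonempty flats whose ranks add up to $\operatorname{rk}H$). *)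

theory Defs
  imports Main
begin

definition matroid :: "'a set \<Rightarrow> ('a set \<Rightarrow> nat) \<Rightarrow> bool" where
  "matroid E rk \<longleftrightarrow> finite E
     \<and> (\<forall>S. S \<subseteq> E \<longrightarrow> rk S \<le> card S)
     \<and> (\<forall>S T. S \<subseteq> T \<and> T \<subseteq> E \<longrightarrow> rk S \<le> rk T)
     \<and> (\<forall>S T. S \<subseteq> E \<and> T \<subseteq> E \<longrightarrow> rk (S \<union> T) + rk (S \<inter> T) \<le> rk S + rk T)"

definition mcl :: "'a set \<Rightarrow> ('a set \<Rightarrow> nat) \<Rightarrow> 'a set \<Rightarrow> 'a set" where
  "mcl E rk S = {x \<in> E. rk (insert x S) = rk S}"

definition flat :: "'a set \<Rightarrow> ('a set \<Rightarrow> nat) \<Rightarrow> 'a set \<Rightarrow> bool" where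
  "flat E rk F \<longleftrightarrow> F \<subseteq> E \<and> (\<forall>x \<in> E - F. rk (insert x F) \<noteq> rk F)"

text \<open>Join of flats is the closure of the union, meet is the intersection; bottom flat is cl(empty).\<close>
definition modular_pair :: "'a set \<Rightarrow> ('a set \<Rightarrow> nat) \<Rightarrow> 'a set \<Rightarrow> 'a set \<Rightarrow> bool" where
  "modular_pair E rk F G \<longleftrightarrow>
     rk (mcl E rk (F \<union> G)) + rk (F \<inter> G) = rk F + rk G"

definition modular_cut :: "'a set \<Rightarrow> ('a set \<Rightarrow> nat) \<Rightarrow> 'a set set \<Rightarrow> bool" where
  "modular_cut E rk MC \<longleftrightarrow>
     (\<forall>F \<in> MC. flat E rk F)
     \<and> (\<forall>F G. F \<in> MC \<and> flat E rk G \<and> F \<subseteq> G \<longrightarrow> G \<in> MC)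
     \<and> (\<forall>F G. F \<in> MC \<and> G \<in> MC \<and> modular_pair E rk F G \<longrightarrow> F \<inter> G \<in> MC)"

definition proper_modular_cut :: "'a set \<Rightarrow> ('a set \<Rightarrow> nat) \<Rightarrow> 'a set set \<Rightarrow> bool" where
  "proper_modular_cut E rk MC \<longleftrightarrow> modular_cut E rk MC \<and> mcl E rk {} \<notin> MC"

text \<open>Rank function of the single-element extension M \<union>_MC e (on E \<union> {e}).\<close>
definition ext_rank :: "'a set \<Rightarrow> ('a set \<Rightarrow> nat) \<Rightarrow> 'a set set \<Rightarrow> 'a \<Rightarrow> 'a set \<Rightarrow> nat" where
  "ext_rank E rk MC e S =
     (if e \<in> S then (if mcl E rk (S - {e}) \<in> MC then rk (S - {e}) else rk (S - {e}) + 1)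
      else rk S)"

definition irreducible_flat :: "'a set \<Rightarrow> ('a set \<Rightarrow> nat) \<Rightarrow> 'a set \<Rightarrow> bool" where
  "irreducible_flat E rk H \<longleftrightarrow> flat E rk H \<and>
     \<not> (\<exists>H1 H2. flat E rk H1 \<and> flat E rk H2 \<and> H1 \<noteq> {} \<and> H2 \<noteq> {}
               \<and> H1 \<inter> H2 = {} \<and> H = H1 \<union> H2 \<and> rk H1 + rk H2 = rk H)"

end

theory Submission
  imports Defs
begin

text \<open>Adjoining e to a flat F of the cut gives a flat of the extension: e does not raise
  the rank of F, while every other element already raises it in M. Now let a flat of the
  extension split as (A + e) and B with additive ranks. A is a flat of M, since an element
  dependent on A would also be dependent on A + e. Submodularity gives rk F \<le> rk A + rk B, so
  additivity forces e into the closure of A, i.e. A lies in the cut. Minimality of F then gives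
  A = F, so B is empty.\<close>

lemma matroid_rank_empty: "matroid E rk \<Longrightarrow> rk {} = 0"
  unfolding matroid_def by (metis card.empty empty_subsetI le_zero_eq)

lemma matroid_rank_mono: "matroid E rk \<Longrightarrow> S \<subseteq> T \<Longrightarrow> T \<subseteq> E \<Longrightarrow> rk S \<le> rk T"
  unfolding matroid_def by blast

lemma matroid_rank_submod:
  "matroid E rk \<Longrightarrow> S \<subseteq> E \<Longrightarrow> T \<subseteq> E \<Longrightarrow> rk (S \<union> T) + rk (S \<inter> T) \<le> rk S + rk T"
  unfolding matroid_def by blast

lemma matroid_rank_disjoint_union_le:
  assumes "matroid E rk" "S \<subseteq> E" "T \<subseteq> E" "S \<inter> T = {}"
  shows "rk (S \<union> T) \<le> rk S + rk T"
  using matroid_rank_submod[OF assms(1-3)] matroid_rank_empty[OF assms(1)] assms(4) by simp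

lemma mcl_flat: "flat E rk F \<Longrightarrow> mcl E rk F = F"
  unfolding flat_def mcl_def by (auto simp: insert_absorb)

lemma mcl_insert_dependent:
  assumes m: "matroid E rk" and A: "A \<subseteq> E" and x: "x \<in> E"
    and dep: "rk (insert x A) = rk A"
  shows "mcl E rk (insert x A) = mcl E rk A"
proof (intro set_eqI iffI)
  fix y assume "y \<in> mcl E rk (insert x A)"
  then have y: "y \<in> E" "rk (insert y (insert x A)) = rk A"
    using dep by (auto simp: mcl_def)
  have "rk A \<le> rk (insert y A)"
    by (rule matroid_rank_mono[OF m]) (use A y in auto)
  moreover have "rk (insert y A) \<le> rk (insert y (insert x A))"
    by (rule matroid_rank_mono[OF m]) (use A x y in auto)
  ultimately have "rk (insert y A) = rk A"
    using y(2) by linarith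
  then show "y \<in> mcl E rk A"
    using y(1) by (simp add: mcl_def)
next
  fix y assume "y \<in> mcl E rk A"
  then have y: "y \<in> E" "rk (insert y A) = rk A" by (auto simp: mcl_def)
  have "insert y A \<union> insert x A = insert y (insert x A)" by blast
  then have "rk (insert y (insert x A)) + rk (insert y A \<inter> insert x A) \<le> rk (insert y A) + rk (insert x A)"
    using matroid_rank_submod[OF m, of "insert y A" "insert x A"] A x y(1) by simp
  moreover have "rk A \<le> rk (insert y A \<inter> insert x A)"
    by (rule matroid_rank_mono[OF m]) (use A x in auto)
  moreover have "rk (insert x A) \<le> rk (insert y (insert x A))"
    by (rule matroid_rank_mono[OF m]) (use A x y in auto)
  ultimately have "rk (insert y (insert x A)) = rk (insert x A)"
    using y(2) by linarith
  then show "y \<in> mcl E rk (insert x A)"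
    using y(1) by (simp add: mcl_def)
qed

lemma ext_rank_without_e: "e \<notin> S \<Longrightarrow> ext_rank E rk MC e S = rk S"
  by (simp add: ext_rank_def)

lemma ext_rank_insert_e:
  "e \<notin> S \<Longrightarrow> ext_rank E rk MC e (insert e S) = (if mcl E rk S \<in> MC then rk S else rk S + 1)"
  by (simp add: ext_rank_def)

lemma flat_of_ext_flat_insert:
  assumes m: "matroid E rk" and eE: "e \<notin> E" and eA: "e \<notin> A"
    and fl: "flat (insert e E) (ext_rank E rk MC e) (insert e A)"
  shows "flat E rk A"
  unfolding flat_def
proof (intro conjI ballI notI)
  show A: "A \<subseteq> E" using fl eA by (auto simp: flat_def)
  fix x assume x: "x \<in> E - A" and dep: "rk (insert x A) = rk A"
  have "e \<noteq> x" using eE x by blast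
  then have "ext_rank E rk MC e (insert x (insert e A)) = ext_rank E rk MC e (insert e (insert x A))"
    by (simp add: insert_commute)
  also have "\<dots> = ext_rank E rk MC e (insert e A)"
    using mcl_insert_dependent[OF m A _ dep] x eA \<open>e \<noteq> x\<close> dep by (simp add: ext_rank_insert_e)
  finally show False
    using fl x \<open>e \<noteq> x\<close> by (auto simp: flat_def)
qed

lemma ext_flat_insert_cut_member:
  assumes m: "matroid E rk" and eE: "e \<notin> E" and flF: "flat E rk F" and F: "F \<in> MC"
  shows "flat (insert e E) (ext_rank E rk MC e) (insert e F)"
  unfolding flat_def
proof (intro conjI ballI)
  have FE: "F \<subseteq> E" using flF by (simp add: flat_def)
  then show "insert e F \<subseteq> insert e E" by auto
  fix x assume "x \<in> insert e E - insert e F"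
  then have x: "x \<in> E - F" and e_notin: "e \<notin> insert x F" "e \<notin> F" using eE FE by auto
  have "rk (insert x F) \<noteq> rk F" using flF x by (simp add: flat_def)
  moreover have "rk F \<le> rk (insert x F)"
    using matroid_rank_mono[OF m, of F "insert x F"] FE x by auto
  ultimately have "rk F < rk (insert x F)" by simp
  also have "\<dots> \<le> ext_rank E rk MC e (insert e (insert x F))"
    using e_notin(1) by (simp add: ext_rank_insert_e)
  finally show "ext_rank E rk MC e (insert x (insert e F)) \<noteq> ext_rank E rk MC e (insert e F)"
    using e_notin(2) F mcl_flat[OF flF] by (simp add: ext_rank_insert_e insert_commute)
qed

lemma ext_flat_split_of_minimal:
  assumes m: "matroid E rk" and eE: "e \<notin> E" and flF: "flat E rk F" and F: "F \<in> MC"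
    and minF: "\<forall>G \<in> MC. G \<subseteq> F \<longrightarrow> G = F"
    and split: "e \<in> H1" "H1 \<inter> H2 = {}" "insert e F = H1 \<union> H2"
    and flH1: "flat (insert e E) (ext_rank E rk MC e) H1"
    and additive: "ext_rank E rk MC e H1 + ext_rank E rk MC e H2 = ext_rank E rk MC e (insert e F)"
  shows "H2 = {}"
proof -
  define A where "A = H1 - {e}"
  have FE: "F \<subseteq> E" using flF by (simp add: flat_def)
  have H1: "H1 = insert e A" and eA: "e \<notin> A" and eH2: "e \<notin> H2"
    using split unfolding A_def by auto
  have F_split: "F = A \<union> H2" "A \<inter> H2 = {}"
    using split eE FE unfolding A_def by auto
  have flA: "flat E rk A"
    using flat_of_ext_flat_insert[OF m eE eA] flH1 H1 by simp
  have rk_F: "ext_rank E rk MC e (insert e F) = rk F"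
    using eE FE F mcl_flat[OF flF] by (subst ext_rank_insert_e) auto
  have "A \<in> MC"
  proof (rule ccontr)
    assume "A \<notin> MC"
    then have "ext_rank E rk MC e H1 = rk A + 1"
      using H1 eA mcl_flat[OF flA] by (simp add: ext_rank_insert_e)
    moreover have "rk F \<le> rk A + rk H2"
      using matroid_rank_disjoint_union_le[OF m, of A H2] F_split FE by simp
    ultimately show False
      using additive ext_rank_without_e[of e H2 E rk MC] eH2 rk_F by linarith
  qed
  then have "A = F" using minF F_split by blast
  then show "H2 = {}" using F_split by blast
qed

lemma irreducible_flatI:
  assumes "flat E rk H"
    and "\<And>H1 H2. flat E rk H1 \<Longrightarrow> flat E rk H2 \<Longrightarrow> H1 \<noteq> {} \<Longrightarrow> H2 \<noteq> {} \<Longrightarrow>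
      H1 \<inter> H2 = {} \<Longrightarrow> H = H1 \<union> H2 \<Longrightarrow> rk H1 + rk H2 = rk H \<Longrightarrow> False"
  shows "irreducible_flat E rk H"
  using assms unfolding irreducible_flat_def by blast

theorem lemma2p19:
  fixes E :: "'a set" and rk :: "'a set \<Rightarrow> nat" and MC :: "'a set set" and e :: 'a and F :: "'a set"
  assumes "matroid E rk"
    and "proper_modular_cut E rk MC"
    and "e \<notin> E"
    and "F \<in> MC"
    and "\<forall>G \<in> MC. G \<subseteq> F \<longrightarrow> G = F"
  shows "irreducible_flat (insert e E) (ext_rank E rk MC e) (insert e F)"
proof -
  let ?rk' = "ext_rank E rk MC e"
  have flF: "flat E rk F"
    using assms(2,4) unfolding proper_modular_cut_def modular_cut_def by blast
  note split_trivial = ext_flat_split_of_minimal[OF assms(1,3) flF assms(4,5)]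
  show ?thesis
  proof (rule irreducible_flatI)
    show "flat (insert e E) ?rk' (insert e F)"
      using ext_flat_insert_cut_member[OF assms(1,3) flF assms(4)] .
  next
    fix H1 H2
    assume H: "flat (insert e E) ?rk' H1" "flat (insert e E) ?rk' H2" "H1 \<noteq> {}" "H2 \<noteq> {}"
      "H1 \<inter> H2 = {}" "insert e F = H1 \<union> H2" "?rk' H1 + ?rk' H2 = ?rk' (insert e F)"
    have "e \<in> H1 \<union> H2" using H(6) by (metis insertI1)
    then show False
    proof
      assume "e \<in> H1"
      from split_trivial[OF this H(5,6,1,7)] H(4) show False by simp
    next
      assume "e \<in> H2"
      moreover have "H2 \<inter> H1 = {}" "insert e F = H2 \<union> H1" "?rk' H2 + ?rk' H1 = ?rk' (insert e F)"
        using H(5-7) by (simp_all add: Int_commute Un_commute add.commute)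
      ultimately have "H1 = {}" using split_trivial H(2) by blast
      with H(3) show False by simp
    qed
  qed
qed

end
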